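(* Let $(\nu_1,\ldots,\nu_r)\in(\underline{\Lambda}^r_n)_0$. Then $L^{(\nu_1,\ldots,\nu_r)}\cong\Delta^{(\nu_1,\ldots,\nu_r)}$ (i.e. the cell form of $\Delta^{(\nu_1,\ldots,\nu_r)}$ is nondegenerate) if and only if $D^{\nu_i}\cong S^{\nu_i}$ for every $i=1,\ldots,r$, and $L^{\lambda_i}\cong\Delta^{\lambda_i}$ for every $i$ with $\nu_i\ne()$.
   Context: $k$ is a field of characteristic $p\ge0$. $A$ is a cellular algebra with totally ordered cell indices $\lambda_1>\cdots>\lambda_r$, cell modules $\Delta^\lambda$ with cell forms, $\Lambda_0$ the set of $\lambda$ whose cell form is nonzero and $L^\lambda=\Delta^\lambda/\mathrm{rad}$. For a partition $\nu$ of $m$, $S^\nu$ is the cell module of $kS_m$ in its standard cellular structure (dual of James's Specht module) and, for $\nu$ $p$-restricted, $D^\nu$ is its quotient by the radical of its cell form. $A\wr S_n$ is $kS_n\otimes A^{\otimes n}$ with product $(\sigma;a)(\pi;b)=(\sigma\pi;a_{(1)\pi^{-1}}b_1,\ldots,a_{(n)\pi^{-1}}b_n)$ (permutations act on the right). It is cellular with anti-involution $(\sigma;a_1,\ldots,a_n)^*=(\sigma^{-1};a^*_{(1)\sigma},\ldots,a^*_{(n)\sigma})$ and cell indices the length-$r$ multipartitions of $n$; for $\mu=(|\nu_1|,\ldots,|\nu_r|)$ the cell module is $\Delta^{(\nu_1,\ldots,\nu_r)}=(\Delta(\lambda_1)^{\otimes\mu_1}\otimes\cdots\otimes\Delta(\lambda_r)^{\otimes\mu_r}\otimes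 S^{\nu_1}\otimes\cdots\otimes S^{\nu_r})\otimes_{A\wr S_\mu}A\wr S_n$ (where $A\wr S_\mu$, spanned by $(\sigma;a)$ with $\sigma$ in the Young subgroup $S_\mu$, acts by $(x_1\otimes\cdots\otimes x_n\otimes y_1\otimes\cdots\otimes y_r)(\sigma;a_1,\ldots,a_n)=x_{(1)\sigma^{-1}}a_1\otimes\cdots\otimes x_{(n)\sigma^{-1}}a_n\otimes y_1\sigma_1\otimes\cdots\otimes y_r\sigma_r$), with cell form $\langle x\otimes y\otimes\gamma,x'\otimes y'\otimes\gamma'\rangle=\delta_{\gamma\gamma'}\prod_i\langle y_i,y'_i\rangle\prod_j\langle x_j,x'_j\rangle$ for $\gamma,\gamma'$ minimal-length right coset representatives of $S_\mu$ in $S_n$. $(\underline{\Lambda}^r_n)_0$ is the set of multipartitions whose cell form is nonzero and $L^{(\nu_1,\ldots,\nu_r)}$ is $\Delta^{(\nu_1,\ldots,\nu_r)}$ modulo the radical of its cell form. *)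

theory Defs
  imports "HOL-Combinatorics.Permutations" "HOL-Library.FuncSet"
begin

text \<open>A bilinear form on the k-span of a finite index set I, given by its Gram
matrix G on that basis, is nondegenerate iff its radical is zero.\<close>
definition nondeg :: "'i set \<Rightarrow> ('i \<Rightarrow> 'i \<Rightarrow> 'k::field) \<Rightarrow> bool" where
  "nondeg I G \<longleftrightarrow>
     (\<forall>v::'i \<Rightarrow> 'k. (\<forall>t\<in>I. (\<Sum>s\<in>I. v s * G s t) = 0) \<longrightarrow> (\<forall>s\<in>I. v s = 0))"

definition form_nonzero :: "'i set \<Rightarrow> ('i \<Rightarrow> 'i \<Rightarrow> 'k::field) \<Rightarrow> bool" where
  "form_nonzero I G \<longleftrightarrow> (\<exists>s\<in>I. \<exists>t\<in>I. G s t \<noteq> 0)"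

section \<open>Cellular algebras (given by structure constants on a cellular basis)\<close>

text \<open>Cell indices are 0,...,r-1 with the total order lambda_0 > lambda_1 > ... ;
 i.e. index i corresponds to the paper's lambda_(i+1), and a smaller index is a
 larger cell index. M i is the indexing set of the cell i. The algebra A has basis
 C(i,s,t), (i,s,t) in cbasis, and C_b1 C_b2 = sum_b sc b1 b2 b * C_b.\<close>

definition cbasis :: "nat \<Rightarrow> (nat \<Rightarrow> 'm set) \<Rightarrow> (nat \<times> 'm \<times> 'm) set" where
  "cbasis r M = {(i,s,t). i < r \<and> s \<in> M i \<and> t \<in> M i}"

fun cflip :: "nat \<times> 'm \<times> 'm \<Rightarrow> nat \<times> 'm \<times> 'm" where
  "cflip (i,s,t) = (i,t,s)"

definition cellular_algebra ::
  "nat \<Rightarrow> (nat \<Rightarrow> 'm set) \<Rightarrow> (nat \<times> 'm \<times> 'm \<Rightarrow> nat \<times> 'm \<times> 'm \<Rightarrow> nat \<times> 'm \<times> 'm \<Rightarrow> 'k::field) \<Rightarrow> bool"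
where
  "cellular_algebra r M sc \<longleftrightarrow>
     (\<forall>i<r. finite (M i)) \<and>
     \<comment> \<open>associativity\<close>
     (\<forall>b1\<in>cbasis r M. \<forall>b2\<in>cbasis r M. \<forall>b3\<in>cbasis r M. \<forall>b\<in>cbasis r M.
        (\<Sum>c\<in>cbasis r M. sc b1 b2 c * sc c b3 b) = (\<Sum>c\<in>cbasis r M. sc b2 b3 c * sc b1 c b)) \<and>
     \<comment> \<open>existence of a unit\<close>
     (\<exists>u. \<forall>b\<in>cbasis r M. \<forall>b'\<in>cbasis r M.
        (\<Sum>c\<in>cbasis r M. u c * sc c b b') = (if b' = b then 1 else 0) \<and>
        (\<Sum>c\<in>cbasis r M. u c * sc b c b') = (if b' = b then 1 else 0)) \<and>
     \<comment> \<open>the linear map with C(i,s,t)* = C(i,t,s) is an anti-automorphism\<close>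
     (\<forall>b1\<in>cbasis r M. \<forall>b2\<in>cbasis r M. \<forall>b\<in>cbasis r M.
        sc b1 b2 (cflip b) = sc (cflip b2) (cflip b1) b) \<and>
     \<comment> \<open>cellular multiplication rule:  a C(i,s,t) = sum_s' r_a(s',s) C(i,s',t) mod A(<lambda_i)\<close>
     (\<forall>a\<in>cbasis r M. \<forall>i<r. \<forall>s\<in>M i. \<exists>\<rho>. \<forall>t\<in>M i. \<forall>j u v.
        (j,u,v) \<in> cbasis r M \<longrightarrow> j \<le> i \<longrightarrow>
        sc a (i,s,t) (j,u,v) = (if j = i \<and> v = t then \<rho> u else 0))"

text \<open>Cell form of the cell module Delta(lambda_i):
  C(i,a,s) C(i,t,b) = <s,t> C(i,a,b) mod A(<lambda_i) (take a = s, b = t).\<close>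
definition cell_form ::
  "(nat \<times> 'm \<times> 'm \<Rightarrow> nat \<times> 'm \<times> 'm \<Rightarrow> nat \<times> 'm \<times> 'm \<Rightarrow> 'k::field) \<Rightarrow> nat \<Rightarrow> 'm \<Rightarrow> 'm \<Rightarrow> 'k"
where
  "cell_form sc i s t = sc (i,s,s) (i,t,t) (i,s,t)"

definition is_partition :: "nat list \<Rightarrow> bool" where
  "is_partition \<nu> \<longleftrightarrow> sorted_wrt (\<ge>) \<nu> \<and> 0 \<notin> set \<nu>"

definition partitions_of :: "nat \<Rightarrow> nat list set" where
  "partitions_of m = {\<nu>. is_partition \<nu> \<and> sum_list \<nu> = m}"

definition dominates_strictly :: "nat list \<Rightarrow> nat list \<Rightarrow> bool" where
  "dominates_strictly \<mu> \<nu> \<longleftrightarrow>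
     \<mu> \<noteq> \<nu> \<and> (\<forall>k. sum_list (take k \<nu>) \<le> sum_list (take k \<mu>))"

text \<open>Block (row) containing position j (0-based) for a composition \<mu>.\<close>
definition block_of :: "nat list \<Rightarrow> nat \<Rightarrow> nat" where
  "block_of \<mu> j = (LEAST i. j < sum_list (take (Suc i) \<mu>))"

definition nodes :: "nat list \<Rightarrow> (nat \<times> nat) set" where
  "nodes \<nu> = {(a,b). a < length \<nu> \<and> b < \<nu> ! a}"

text \<open>Tableaux have entries 0,...,m-1 (instead of 1,...,m).\<close>
definition std_tableaux :: "nat list \<Rightarrow> ((nat \<times> nat) \<Rightarrow> nat) set" where
  "std_tableaux \<nu> = {t \<in> nodes \<nu> \<rightarrow>\<^sub>E {..<sum_list \<nu>}.
      bij_betw t (nodes \<nu>) {..<sum_list \<nu>} \<and>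
      (\<forall>a b. (a, Suc b) \<in> nodes \<nu> \<longrightarrow> t (a,b) < t (a, Suc b)) \<and>
      (\<forall>a b. (Suc a, b) \<in> nodes \<nu> \<longrightarrow> t (a,b) < t (Suc a, b))}"

definition tinit :: "nat list \<Rightarrow> (nat \<times> nat) \<Rightarrow> nat" where
  "tinit \<nu> = restrict (\<lambda>(a,b). sum_list (take a \<nu>) + b) (nodes \<nu>)"

text \<open>Permutations of {0..<m}; they act on the right: (i)(\<sigma>\<pi>) = ((i)\<sigma>)\<pi>,
 i.e. the product \<sigma>\<pi> is the function \<pi> \<circ> \<sigma>.\<close>
definition perms :: "nat \<Rightarrow> (nat \<Rightarrow> nat) set" where
  "perms m = {\<sigma>. \<sigma> permutes {..<m}}"

text \<open>d(t): t = t^nu d(t).\<close>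
definition dperm :: "nat list \<Rightarrow> ((nat \<times> nat) \<Rightarrow> nat) \<Rightarrow> nat \<Rightarrow> nat" where
  "dperm \<nu> t = (\<lambda>i. if i < sum_list \<nu> then t (inv_into (nodes \<nu>) (tinit \<nu>) i) else i)"

definition young :: "nat list \<Rightarrow> (nat \<Rightarrow> nat) set" where
  "young \<mu> = {w \<in> perms (sum_list \<mu>). \<forall>i<sum_list \<mu>. block_of \<mu> (w i) = block_of \<mu> i}"

text \<open>Group algebra kS_m: functions from permutations to k.\<close>
definition gdelta :: "(nat \<Rightarrow> nat) \<Rightarrow> (nat \<Rightarrow> nat) \<Rightarrow> 'k::field" where
  "gdelta w = (\<lambda>u. if u = w then 1 else 0)"

definition gmult :: "nat \<Rightarrow> ((nat \<Rightarrow> nat) \<Rightarrow> 'k::field) \<Rightarrow> ((nat \<Rightarrow> nat) \<Rightarrow> 'k) \<Rightarrow> (nat \<Rightarrow> nat) \<Rightarrow> 'k" where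
  "gmult m f g = (\<lambda>w. \<Sum>\<sigma>\<in>perms m. f \<sigma> * g (w \<circ> inv \<sigma>))"

text \<open>x_nu = sum of the row stabiliser of t^nu.\<close>
definition xnu :: "nat list \<Rightarrow> (nat \<Rightarrow> nat) \<Rightarrow> 'k::field" where
  "xnu \<nu> = (\<lambda>w. if w \<in> young \<nu> then 1 else 0)"

text \<open>Murphy basis x_{st} = d(s)^* x_nu d(t), with w^* = w^-1.\<close>
definition murphy :: "nat list \<Rightarrow> ((nat \<times> nat) \<Rightarrow> nat) \<Rightarrow> ((nat \<times> nat) \<Rightarrow> nat) \<Rightarrow> (nat \<Rightarrow> nat) \<Rightarrow> 'k::field" where
  "murphy \<nu> s t = gmult (sum_list \<nu>) (gmult (sum_list \<nu>) (gdelta (inv (dperm \<nu> s))) (xnu \<nu>)) (gdelta (dperm \<nu> t))"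

definition in_higher_span :: "nat list \<Rightarrow> ((nat \<Rightarrow> nat) \<Rightarrow> 'k::field) \<Rightarrow> bool" where
  "in_higher_span \<nu> f \<longleftrightarrow>
    (\<exists>c. f = (\<lambda>w. \<Sum>(\<mu>,u,v) \<in> {(\<mu>,u,v). \<mu> \<in> partitions_of (sum_list \<nu>) \<and>
              dominates_strictly \<mu> \<nu> \<and> u \<in> std_tableaux \<mu> \<and> v \<in> std_tableaux \<mu>}.
              c (\<mu>,u,v) * murphy \<mu> u v w))"

text \<open>Cell form of the cell module S^nu of kS_m (standard cellular structure):
  x_{a s} x_{t b} = <s,t> x_{a b} mod higher terms (take a = b = t^nu).\<close>
definition specht_form :: "nat list \<Rightarrow> ((nat \<times> nat) \<Rightarrow> nat) \<Rightarrow> ((nat \<times> nat) \<Rightarrow> nat) \<Rightarrow> 'k::field" where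
  "specht_form \<nu> s t = (THE c. in_higher_span \<nu>
      (\<lambda>w. gmult (sum_list \<nu>) (murphy \<nu> (tinit \<nu>) s) (murphy \<nu> t (tinit \<nu>)) w
            - c * murphy \<nu> (tinit \<nu>) (tinit \<nu>) w))"

definition multipartition :: "nat \<Rightarrow> nat \<Rightarrow> nat list list \<Rightarrow> bool" where
  "multipartition r n \<nu>s \<longleftrightarrow> length \<nu>s = r \<and> (\<forall>\<nu>\<in>set \<nu>s. is_partition \<nu>) \<and>
     sum_list (map sum_list \<nu>s) = n"

text \<open>Inversion number = Coxeter length.\<close>
definition perm_length :: "nat \<Rightarrow> (nat \<Rightarrow> nat) \<Rightarrow> nat" where
  "perm_length n \<sigma> = card {(a,b). a < b \<and> b < n \<and> \<sigma> b < \<sigma> a}"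

text \<open>Minimal length right coset representatives of S_\<mu> in S_n
 (the coset S_\<mu> \<gamma> = {w\<gamma>}, and w\<gamma> is the function \<gamma> \<circ> w).\<close>
definition coset_reps :: "nat list \<Rightarrow> (nat \<Rightarrow> nat) set" where
  "coset_reps \<mu> = {\<gamma> \<in> perms (sum_list \<mu>). \<forall>w\<in>young \<mu>.
      perm_length (sum_list \<mu>) \<gamma> \<le> perm_length (sum_list \<mu>) (\<gamma> \<circ> w)}"

text \<open>Basis of Delta^(nu_1,...,nu_r): x_1 \<otimes> ... \<otimes> x_n \<otimes> y_1 \<otimes> ... \<otimes> y_r \<otimes> \<gamma>,
 where x_j runs over the basis M(lambda) of Delta(lambda) for the cell lambda of the block
 containing j, y_i over the standard nu_i-tableaux, \<gamma> over coset representatives.\<close>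
definition wr_basis :: "nat \<Rightarrow> (nat \<Rightarrow> 'm set) \<Rightarrow> nat list list \<Rightarrow>
    ('m list \<times> ((nat \<times> nat) \<Rightarrow> nat) list \<times> (nat \<Rightarrow> nat)) set" where
  "wr_basis r M \<nu>s = (let \<mu> = map sum_list \<nu>s; n = sum_list \<mu> in
     {(xs, ys, \<gamma>). length xs = n \<and> (\<forall>j<n. xs ! j \<in> M (block_of \<mu> j)) \<and>
        length ys = r \<and> (\<forall>i<r. ys ! i \<in> std_tableaux (\<nu>s ! i)) \<and> \<gamma> \<in> coset_reps \<mu>})"

definition wr_form ::
  "nat \<Rightarrow> (nat \<times> 'm \<times> 'm \<Rightarrow> nat \<times> 'm \<times> 'm \<Rightarrow> nat \<times> 'm \<times> 'm \<Rightarrow> 'k::field) \<Rightarrow> nat list list \<Rightarrow>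
   ('m list \<times> ((nat \<times> nat) \<Rightarrow> nat) list \<times> (nat \<Rightarrow> nat)) \<Rightarrow>
   ('m list \<times> ((nat \<times> nat) \<Rightarrow> nat) list \<times> (nat \<Rightarrow> nat)) \<Rightarrow> 'k" where
  "wr_form r sc \<nu>s = (\<lambda>(xs, ys, \<gamma>) (xs', ys', \<gamma>').
     (let \<mu> = map sum_list \<nu>s; n = sum_list \<mu> in
      (if \<gamma> = \<gamma>' then 1 else 0) *
      (\<Prod>i<r. specht_form (\<nu>s ! i) (ys ! i) (ys' ! i)) *
      (\<Prod>j<n. cell_form sc (block_of \<mu> j) (xs ! j) (xs' ! j))))"

end

theory Submission
  imports Defs
begin

text \<open>In the basis \<open>x \<otimes> y \<otimes> \<gamma>\<close> the Gram matrix of the cell form of \<open>\<Delta>^(\<nu>\<^sub>1,\<dots>,\<nu>\<^sub>r)\<close> is a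
  Kronecker product: one factor is the Gram matrix of the cell form of \<open>\<Delta>(\<lambda>)\<close> for each
  position \<open>j \<le> n\<close>, where \<open>\<lambda>\<close> is the cell of the block containing \<open>j\<close>; one is the Gram matrix of
  the cell form of \<open>S^\<nu>\<^sub>i\<close> for each \<open>i\<close>; the last is the identity matrix on the coset
  representatives. A Kronecker product of Gram matrices on nonempty finite index sets is
  nondegenerate iff every factor is, and nonemptiness holds because the form is nonzero.
  The cells met by the positions are exactly the \<open>\<lambda>\<^sub>i\<close> with \<open>\<nu>\<^sub>i \<noteq> ()\<close>.\<close>

lemma nondegI:
  "(\<And>v s. \<forall>t\<in>I. (\<Sum>s\<in>I. v s * G s t) = 0 \<Longrightarrow> s \<in> I \<Longrightarrow> v s = 0) \<Longrightarrow> nondeg I G"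
  unfolding nondeg_def by blast

lemma nondegD:
  "nondeg I G \<Longrightarrow> \<forall>t\<in>I. (\<Sum>s\<in>I. v s * G s t) = 0 \<Longrightarrow> s \<in> I \<Longrightarrow> v s = 0"
  unfolding nondeg_def by blast

lemma nondeg_cong:
  assumes "\<And>s t. s \<in> I \<Longrightarrow> t \<in> I \<Longrightarrow> G s t = G' s t"
  shows "nondeg I G \<longleftrightarrow> nondeg I G'"
  unfolding nondeg_def using assms by (simp cong: sum.cong)

lemma nondeg_reindex:
  assumes "inj_on f I"
  shows "nondeg (f ` I) G \<longleftrightarrow> nondeg I (\<lambda>s t. G (f s) (f t))"
proof
  assume nd: "nondeg (f ` I) G"
  show "nondeg I (\<lambda>s t. G (f s) (f t))"
  proof (rule nondegI)
    fix v s assume "\<forall>t\<in>I. (\<Sum>s\<in>I. v s * G (f s) (f t)) = 0" and "s \<in> I"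
    then have "\<forall>t\<in>f ` I. (\<Sum>s\<in>f ` I. (v \<circ> inv_into I f) s * G s t) = 0"
      using assms by (auto simp: sum.reindex)
    then have "(v \<circ> inv_into I f) (f s) = 0" using nondegD[OF nd] \<open>s \<in> I\<close> by blast
    then show "v s = 0" using assms \<open>s \<in> I\<close> by simp
  qed
next
  assume nd: "nondeg I (\<lambda>s t. G (f s) (f t))"
  show "nondeg (f ` I) G"
  proof (rule nondegI)
    fix v s assume "\<forall>t\<in>f ` I. (\<Sum>s\<in>f ` I. v s * G s t) = 0" and "s \<in> f ` I"
    then have "\<forall>t\<in>I. (\<Sum>s\<in>I. (v \<circ> f) s * G (f s) (f t)) = 0"
      using assms by (auto simp: sum.reindex)
    then show "v s = 0" using nondegD[OF nd] \<open>s \<in> f ` I\<close> by fastforce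
  qed
qed

lemma nondeg_Kronecker_delta:
  "finite I \<Longrightarrow> nondeg I (\<lambda>s t. if s = t then (1::'k::field) else 0)"
  unfolding nondeg_def by (simp add: if_distrib[where f="\<lambda>x. _ * x"] cong: if_cong)

definition tensor_form :: "('a \<Rightarrow> 'a \<Rightarrow> 'k::field) \<Rightarrow> ('b \<Rightarrow> 'b \<Rightarrow> 'k) \<Rightarrow> 'a \<times> 'b \<Rightarrow> 'a \<times> 'b \<Rightarrow> 'k"
  where "tensor_form GA GB = (\<lambda>(a, b) (a', b'). GA a a' * GB b b')"

lemma tensor_form_apply [simp]: "tensor_form GA GB (a, b) (a', b') = GA a a' * GB b b'"
  by (simp add: tensor_form_def)

lemma sum_tensor_form:
  "(\<Sum>s\<in>A \<times> B. v s * tensor_form GA GB s (t, t')) = (\<Sum>b\<in>B. (\<Sum>a\<in>A. v (a, b) * GA a t) * GB b t')"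
proof -
  have "(\<Sum>s\<in>A \<times> B. v s * tensor_form GA GB s (t, t')) = (\<Sum>(a, b)\<in>A \<times> B. v (a, b) * (GA a t * GB b t'))"
    by (rule sum.cong) auto
  also have "\<dots> = (\<Sum>b\<in>B. \<Sum>a\<in>A. v (a, b) * (GA a t * GB b t'))"
    by (simp add: sum.cartesian_product[symmetric] sum.swap[of _ A])
  finally show ?thesis by (simp add: sum_distrib_right mult.assoc)
qed

lemma nondeg_tensor_form_left:
  assumes "b0 \<in> B" and "finite B"
    and nd: "nondeg (A \<times> B) (tensor_form GA GB)"
  shows "nondeg A GA"
proof (rule nondegI)
  fix v s assume hv: "\<forall>t\<in>A. (\<Sum>s\<in>A. v s * GA s t) = 0" and "s \<in> A"
  define w where "w = (\<lambda>(a, b). if b = b0 then v a else 0)"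
  have "(\<Sum>p\<in>A \<times> B. w p * tensor_form GA GB p (t, t')) = 0" if "t \<in> A" for t t'
  proof -
    have "(\<Sum>p\<in>A \<times> B. w p * tensor_form GA GB p (t, t'))
        = (\<Sum>b\<in>B. if b = b0 then (\<Sum>a\<in>A. v a * GA a t) * GB b t' else 0)"
      unfolding sum_tensor_form by (rule sum.cong) (auto simp: w_def)
    also have "\<dots> = 0" using assms(1,2) hv that by simp
    finally show ?thesis .
  qed
  then have "w (s, b0) = 0" using nondegD[OF nd] \<open>s \<in> A\<close> assms(1) by blast
  then show "v s = 0" by (simp add: w_def)
qed

lemma nondeg_tensor_form_swap:
  "nondeg (A \<times> B) (tensor_form GA GB) \<longleftrightarrow> nondeg (B \<times> A) (tensor_form GB GA)"
proof -
  have inj: "inj_on prod.swap (A \<times> B)" by (simp add: inj_on_def)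
  have "nondeg (B \<times> A) (tensor_form GB GA) \<longleftrightarrow>
        nondeg (A \<times> B) (\<lambda>s t. tensor_form GB GA (prod.swap s) (prod.swap t))"
    using nondeg_reindex[OF inj] by (simp add: product_swap)
  also have "\<dots> \<longleftrightarrow> nondeg (A \<times> B) (tensor_form GA GB)"
    by (rule nondeg_cong) (auto simp: mult.commute)
  finally show ?thesis by simp
qed

lemma nondeg_tensor_form_iff:
  assumes "A \<noteq> {}" and "B \<noteq> {}" and fA: "finite A" and fB: "finite B"
  shows "nondeg (A \<times> B) (tensor_form GA GB) \<longleftrightarrow> nondeg A GA \<and> nondeg B GB"
proof
  assume nd: "nondeg (A \<times> B) (tensor_form GA GB)"
  obtain a0 b0 where "a0 \<in> A" "b0 \<in> B" using assms by blast
  show "nondeg A GA \<and> nondeg B GB"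
  proof
    show "nondeg A GA" by (rule nondeg_tensor_form_left[OF \<open>b0 \<in> B\<close> fB nd])
    show "nondeg B GB"
      by (rule nondeg_tensor_form_left[OF \<open>a0 \<in> A\<close> fA nondeg_tensor_form_swap[THEN iffD1, OF nd]])
  qed
next
  assume "nondeg A GA \<and> nondeg B GB"
  then have nA: "nondeg A GA" and nB: "nondeg B GB" by auto
  show "nondeg (A \<times> B) (tensor_form GA GB)"
  proof (rule nondegI)
    fix v p assume hv: "\<forall>t\<in>A \<times> B. (\<Sum>s\<in>A \<times> B. v s * tensor_form GA GB s t) = 0"
      and "p \<in> A \<times> B"
    then obtain a b where p: "p = (a, b)" "a \<in> A" "b \<in> B" by blast
    have "(\<Sum>a\<in>A. v (a, b) * GA a t) = 0" if "t \<in> A" for t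
    proof (rule nondegD[OF nB _ \<open>b \<in> B\<close>], intro ballI)
      fix t' assume "t' \<in> B"
      then have "(\<Sum>s\<in>A \<times> B. v s * tensor_form GA GB s (t, t')) = 0" using hv that by blast
      then show "(\<Sum>b\<in>B. (\<Sum>a\<in>A. v (a, b) * GA a t) * GB b t') = 0"
        by (simp only: sum_tensor_form)
    qed
    then show "v p = 0" using nondegD[OF nA _ \<open>a \<in> A\<close>, of "\<lambda>a. v (a, b)"] p by blast
  qed
qed

definition tuples :: "nat \<Rightarrow> (nat \<Rightarrow> 'a set) \<Rightarrow> 'a list set" where
  "tuples n I = {xs. length xs = n \<and> (\<forall>j<n. xs ! j \<in> I j)}"

definition tuple_form :: "nat \<Rightarrow> (nat \<Rightarrow> 'a \<Rightarrow> 'a \<Rightarrow> 'k::field) \<Rightarrow> 'a list \<Rightarrow> 'a list \<Rightarrow> 'k" where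
  "tuple_form n G xs ys = (\<Prod>j<n. G j (xs ! j) (ys ! j))"

lemma tuples_0: "tuples 0 I = {[]}"
  by (auto simp: tuples_def)

lemma tuples_Suc:
  "tuples (Suc n) I = (\<lambda>(x, xs). x # xs) ` (I 0 \<times> tuples n (\<lambda>j. I (Suc j)))"
proof (intro set_eqI iffI)
  fix ys assume ys: "ys \<in> tuples (Suc n) I"
  then obtain x xs where "ys = x # xs" by (cases ys) (auto simp: tuples_def)
  with ys have "(x, xs) \<in> I 0 \<times> tuples n (\<lambda>j. I (Suc j))"
    by (simp add: tuples_def All_less_Suc2)
  with \<open>ys = x # xs\<close> show "ys \<in> (\<lambda>(x, xs). x # xs) ` (I 0 \<times> tuples n (\<lambda>j. I (Suc j)))"
    by (auto intro: image_eqI)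
next
  fix ys assume "ys \<in> (\<lambda>(x, xs). x # xs) ` (I 0 \<times> tuples n (\<lambda>j. I (Suc j)))"
  then obtain x xs where "ys = x # xs" "x \<in> I 0" "xs \<in> tuples n (\<lambda>j. I (Suc j))" by auto
  then show "ys \<in> tuples (Suc n) I" by (simp add: tuples_def All_less_Suc2)
qed

lemma finite_tuples: "(\<And>j. j < n \<Longrightarrow> finite (I j)) \<Longrightarrow> finite (tuples n I)"
proof (induction n arbitrary: I)
  case (Suc n)
  have "finite (tuples n (\<lambda>j. I (Suc j)))" by (rule Suc.IH) (simp add: Suc.prems)
  then show ?case using Suc.prems[of 0] by (simp add: tuples_Suc)
qed (simp add: tuples_0)

lemma tuple_form_Cons:
  "tuple_form (Suc n) G (x # xs) (y # ys) = G 0 x y * tuple_form n (\<lambda>j. G (Suc j)) xs ys"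
  unfolding tuple_form_def prod.lessThan_Suc_shift by simp

lemma nondeg_tuple_form_iff:
  "tuples n I \<noteq> {} \<Longrightarrow> (\<And>j. j < n \<Longrightarrow> finite (I j)) \<Longrightarrow>
   nondeg (tuples n I) (tuple_form n G) \<longleftrightarrow> (\<forall>j<n. nondeg (I j) (G j))"
proof (induction n arbitrary: I G)
  case 0
  then show ?case by (simp add: tuples_0 tuple_form_def nondeg_def)
next
  case (Suc n)
  let ?I' = "\<lambda>j. I (Suc j)" and ?G' = "\<lambda>j. G (Suc j)"
  have ne: "I 0 \<noteq> {}" "tuples n ?I' \<noteq> {}" using Suc.prems(1) by (auto simp: tuples_Suc)
  have fin': "\<And>j. j < n \<Longrightarrow> finite (?I' j)" using Suc.prems(2) by simp
  have fin: "finite (I 0)" "finite (tuples n ?I')"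
    using Suc.prems(2)[of 0] finite_tuples[OF fin'] by simp_all
  have inj: "inj_on (\<lambda>(x, xs). x # xs) (I 0 \<times> tuples n ?I')" by (auto simp: inj_on_def)
  have "nondeg (tuples (Suc n) I) (tuple_form (Suc n) G) \<longleftrightarrow>
        nondeg (I 0 \<times> tuples n ?I') (tensor_form (G 0) (tuple_form n ?G'))"
    unfolding tuples_Suc nondeg_reindex[OF inj]
    by (rule nondeg_cong) (auto simp: tuple_form_Cons)
  also have "\<dots> \<longleftrightarrow> nondeg (I 0) (G 0) \<and> (\<forall>j<n. nondeg (?I' j) (?G' j))"
    using nondeg_tensor_form_iff[OF ne fin, of "G 0" "tuple_form n ?G'"]
      Suc.IH[OF ne(2) fin', of ?G'] by simp
  also have "\<dots> \<longleftrightarrow> (\<forall>j<Suc n. nondeg (I j) (G j))"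
    by (auto simp: less_Suc_eq_0_disj)
  finally show ?case .
qed

lemma sum_list_take_mono: "m \<le> n \<Longrightarrow> sum_list (take m (xs::nat list)) \<le> sum_list (take n xs)"
  by (metis le_add1 le_add_diff_inverse sum_list_append take_add)

lemma block_of_bounds:
  assumes "j < sum_list (\<mu>::nat list)"
  shows "block_of \<mu> j < length \<mu>"
    and "sum_list (take (block_of \<mu> j) \<mu>) \<le> j"
    and "j < sum_list (take (block_of \<mu> j) \<mu>) + \<mu> ! block_of \<mu> j"
proof -
  let ?P = "\<lambda>i. j < sum_list (take (Suc i) \<mu>)"
  have b: "block_of \<mu> j = (LEAST i. ?P i)" by (simp add: block_of_def)
  have "\<mu> \<noteq> []" using assms by auto
  then have "?P (length \<mu> - 1)" using assms by simp
  then have "block_of \<mu> j \<le> length \<mu> - 1" unfolding b by (rule Least_le)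
  then show lt: "block_of \<mu> j < length \<mu>" using \<open>\<mu> \<noteq> []\<close> by (simp add: less_eq_iff_succ_less)
  have "?P (block_of \<mu> j)" unfolding b by (rule LeastI[of ?P, OF \<open>?P (length \<mu> - 1)\<close>])
  then show "j < sum_list (take (block_of \<mu> j) \<mu>) + \<mu> ! block_of \<mu> j"
    using lt by (simp add: take_Suc_conv_app_nth)
  show "sum_list (take (block_of \<mu> j) \<mu>) \<le> j"
  proof (cases "block_of \<mu> j")
    case (Suc k)
    then have "\<not> ?P k" using not_less_Least[of k ?P] b by simp
    then show ?thesis using Suc by simp
  qed simp
qed

lemma block_of_sum_take:
  assumes "i < length (\<mu>::nat list)" and "\<mu> ! i \<noteq> 0"
  shows "block_of \<mu> (sum_list (take i \<mu>)) = i"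
  unfolding block_of_def
proof (rule Least_equality)
  show "sum_list (take i \<mu>) < sum_list (take (Suc i) \<mu>)"
    using assms by (simp add: take_Suc_conv_app_nth)
next
  fix k assume "sum_list (take i \<mu>) < sum_list (take (Suc k) \<mu>)"
  then show "i \<le> k" using sum_list_take_mono[of "Suc k" i \<mu>] by linarith
qed

lemma block_of_image:
  "block_of \<mu> ` {..<sum_list \<mu>} = {i. i < length \<mu> \<and> \<mu> ! i \<noteq> 0}"
proof (intro set_eqI iffI)
  fix i assume "i \<in> block_of \<mu> ` {..<sum_list \<mu>}"
  then obtain j where "j < sum_list \<mu>" "i = block_of \<mu> j" by auto
  then show "i \<in> {i. i < length \<mu> \<and> \<mu> ! i \<noteq> 0}"
    using block_of_bounds[of j \<mu>] by auto
next
  fix i assume i: "i \<in> {i. i < length \<mu> \<and> \<mu> ! i \<noteq> 0}"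
  then have "sum_list (take (Suc i) \<mu>) \<le> sum_list \<mu>"
    using sum_list_take_mono[of "Suc i" "length \<mu>" \<mu>] by simp
  then have "sum_list (take i \<mu>) < sum_list \<mu>"
    using i by (simp add: take_Suc_conv_app_nth)
  then show "i \<in> block_of \<mu> ` {..<sum_list \<mu>}"
    using block_of_sum_take[of i \<mu>] i by (auto intro!: image_eqI)
qed

lemma partition_sum_list_eq_0_iff: "is_partition \<nu> \<Longrightarrow> sum_list \<nu> = 0 \<longleftrightarrow> \<nu> = []"
  by (cases \<nu>) (auto simp: is_partition_def)

lemma finite_nodes: "finite (nodes \<nu>)"
proof (rule finite_subset)
  show "nodes \<nu> \<subseteq> (SIGMA a:{..<length \<nu>}. {..<\<nu> ! a})" by (auto simp: nodes_def)
qed auto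

lemma finite_std_tableaux: "finite (std_tableaux \<nu>)"
proof (rule finite_subset)
  show "std_tableaux \<nu> \<subseteq> nodes \<nu> \<rightarrow>\<^sub>E {..<sum_list \<nu>}" by (auto simp: std_tableaux_def)
qed (simp add: finite_PiE finite_nodes)

lemma finite_coset_reps: "finite (coset_reps \<mu>)"
proof (rule finite_subset)
  show "coset_reps \<mu> \<subseteq> {\<sigma>. \<sigma> permutes {..<sum_list \<mu>}}" by (auto simp: coset_reps_def perms_def)
qed (simp add: finite_permutations)

lemma wr_basis_eq:
  "wr_basis r M \<nu>s = tuples (sum_list (map sum_list \<nu>s)) (\<lambda>j. M (block_of (map sum_list \<nu>s) j))
     \<times> (tuples r (\<lambda>i. std_tableaux (\<nu>s ! i)) \<times> coset_reps (map sum_list \<nu>s))"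
  by (auto simp: wr_basis_def tuples_def Let_def)

lemma wr_form_eq:
  "wr_form r sc \<nu>s = tensor_form
     (tuple_form (sum_list (map sum_list \<nu>s)) (\<lambda>j. cell_form sc (block_of (map sum_list \<nu>s) j)))
     (tensor_form (tuple_form r (\<lambda>i. specht_form (\<nu>s ! i))) (\<lambda>\<gamma> \<gamma>'. if \<gamma> = \<gamma>' then 1 else 0))"
  by (simp add: wr_form_def tensor_form_def tuple_form_def Let_def fun_eq_iff split_def mult_ac)

lemma multipartition_block_of_image:
  assumes "multipartition r n \<nu>s"
  shows "block_of (map sum_list \<nu>s) ` {..<sum_list (map sum_list \<nu>s)} = {i. i < r \<and> \<nu>s ! i \<noteq> []}"
proof -
  have len: "length \<nu>s = r" and parts: "\<forall>\<nu>\<in>set \<nu>s. is_partition \<nu>"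
    using assms by (auto simp: multipartition_def)
  have "map sum_list \<nu>s ! i \<noteq> 0 \<longleftrightarrow> \<nu>s ! i \<noteq> []" if "i < r" for i
    using parts len that partition_sum_list_eq_0_iff[of "\<nu>s ! i"] by simp
  then show ?thesis unfolding block_of_image length_map len by blast
qed

lemma nondeg_wr_form_iff:
  fixes sc :: "nat \<times> 'm \<times> 'm \<Rightarrow> nat \<times> 'm \<times> 'm \<Rightarrow> nat \<times> 'm \<times> 'm \<Rightarrow> 'k::field"
    and \<nu>s :: "nat list list"
  defines "\<mu> \<equiv> map sum_list \<nu>s"
  assumes finite_M: "\<And>i. i < length \<nu>s \<Longrightarrow> finite (M i)" and "wr_basis r M \<nu>s \<noteq> {}"
  shows "nondeg (wr_basis r M \<nu>s) (wr_form r sc \<nu>s) \<longleftrightarrow>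
      (\<forall>j<sum_list \<mu>. nondeg (M (block_of \<mu> j)) (cell_form sc (block_of \<mu> j))) \<and>
      (\<forall>i<r. nondeg (std_tableaux (\<nu>s ! i)) (specht_form (\<nu>s ! i) :: _ \<Rightarrow> _ \<Rightarrow> 'k))"
proof -
  define X where "X = tuples (sum_list \<mu>) (\<lambda>j. M (block_of \<mu> j))"
  define Y where "Y = tuples r (\<lambda>i. std_tableaux (\<nu>s ! i))"
  define C where "C = coset_reps \<mu>"
  have "wr_basis r M \<nu>s = X \<times> (Y \<times> C)"
    unfolding wr_basis_eq X_def Y_def C_def \<mu>_def ..
  then have ne: "X \<noteq> {}" "Y \<noteq> {}" "C \<noteq> {}" using assms(3) by auto
  have finite_blocks: "finite (M (block_of \<mu> j))" if "j < sum_list \<mu>" for j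
    using finite_M block_of_bounds(1)[OF that] by (simp add: \<mu>_def)
  have fin: "finite X" "finite Y" "finite C"
    using finite_blocks
    by (simp_all add: X_def Y_def C_def finite_tuples finite_std_tableaux finite_coset_reps)
  have "nondeg (wr_basis r M \<nu>s) (wr_form r sc \<nu>s) \<longleftrightarrow>
      nondeg X (tuple_form (sum_list \<mu>) (\<lambda>j. cell_form sc (block_of \<mu> j))) \<and>
      nondeg Y (tuple_form r (\<lambda>i. specht_form (\<nu>s ! i)) :: _ \<Rightarrow> _ \<Rightarrow> 'k)"
    unfolding wr_basis_eq wr_form_eq \<mu>_def[symmetric] X_def[symmetric] Y_def[symmetric] C_def[symmetric]
    using ne fin by (simp add: nondeg_tensor_form_iff nondeg_Kronecker_delta)
  also have "\<dots> \<longleftrightarrow> (\<forall>j<sum_list \<mu>. nondeg (M (block_of \<mu> j)) (cell_form sc (block_of \<mu> j))) \<and>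
      (\<forall>i<r. nondeg (std_tableaux (\<nu>s ! i)) (specht_form (\<nu>s ! i) :: _ \<Rightarrow> _ \<Rightarrow> 'k))"
    using ne finite_blocks unfolding X_def Y_def
    by (simp add: nondeg_tuple_form_iff finite_std_tableaux)
  finally show ?thesis .
qed

theorem theorem5p4:
  fixes r n :: nat
    and M :: "nat \<Rightarrow> 'm set"
    and sc :: "nat \<times> 'm \<times> 'm \<Rightarrow> nat \<times> 'm \<times> 'm \<Rightarrow> nat \<times> 'm \<times> 'm \<Rightarrow> 'k::field"
    and \<nu>s :: "nat list list"
  assumes "cellular_algebra r M sc"
    and "multipartition r n \<nu>s"
    and "form_nonzero (wr_basis r M \<nu>s) (wr_form r sc \<nu>s)"
  shows "nondeg (wr_basis r M \<nu>s) (wr_form r sc \<nu>s) \<longleftrightarrow>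
           (\<forall>i<r. nondeg (std_tableaux (\<nu>s ! i)) (specht_form (\<nu>s ! i) :: _ \<Rightarrow> _ \<Rightarrow> 'k)) \<and>
           (\<forall>i<r. \<nu>s ! i \<noteq> [] \<longrightarrow> nondeg (M i) (cell_form sc i))"
proof -
  let ?\<mu> = "map sum_list \<nu>s"
  have "\<And>i. i < length \<nu>s \<Longrightarrow> finite (M i)"
    using assms(1,2) by (simp add: cellular_algebra_def multipartition_def)
  moreover have "wr_basis r M \<nu>s \<noteq> {}"
    using assms(3) by (auto simp: form_nonzero_def)
  ultimately have "nondeg (wr_basis r M \<nu>s) (wr_form r sc \<nu>s) \<longleftrightarrow>
      (\<forall>j<sum_list ?\<mu>. nondeg (M (block_of ?\<mu> j)) (cell_form sc (block_of ?\<mu> j))) \<and>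
      (\<forall>i<r. nondeg (std_tableaux (\<nu>s ! i)) (specht_form (\<nu>s ! i) :: _ \<Rightarrow> _ \<Rightarrow> 'k))"
    by (rule nondeg_wr_form_iff)
  also have "(\<forall>j<sum_list ?\<mu>. nondeg (M (block_of ?\<mu> j)) (cell_form sc (block_of ?\<mu> j))) \<longleftrightarrow>
      (\<forall>i\<in>block_of ?\<mu> ` {..<sum_list ?\<mu>}. nondeg (M i) (cell_form sc i))"
    by auto
  also have "\<dots> \<longleftrightarrow> (\<forall>i<r. \<nu>s ! i \<noteq> [] \<longrightarrow> nondeg (M i) (cell_form sc i))"
    unfolding multipartition_block_of_image[OF assms(2)] by auto
  finally show ?thesis by blast
qed

end
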